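(* Let $M=(E,\mathcal{I})$ be a matroid and consider the matroid game with a diagonal loss matrix $L$ with $L_{e,e}>0$ for all $e\in E$. If this game has a symmetric Nash equilibrium $(x,x)$, then $x$ is the unique lexicographically optimal point of $B(M)$ with respect to the weight vector $w(e)=1/L_{e,e}$ ($e\in E$).
   Context: $B(M)=\{x\ge0: x(S)\le r(S)\ \forall S\subseteq E,\ x(E)=r(E)\}$ with $r$ the rank function. In the matroid game, the row player chooses $x\in B(M)$ minimizing $x^TLy$ and the column player chooses $y\in B(M)$ maximizing it; $(x,x)$ is a symmetric Nash equilibrium if $x^TLz\le x^TLx\le z^TLx$ for all $z\in B(M)$. For a positive weight vector $w$, $x\in B(M)$ is lexicographically optimal if the $|E|$-tuple $(x(e)/w(e))_{e\in E}$ sorted in increasing order is lexicographically maximum among all such sorted tuples $(y(e)/w(e))_{e\in E}$ for $y\in B(M)$. *)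

theory Defs
  imports Complex_Main "HOL-Library.Multiset"
begin

definition matroid :: "'a set \<Rightarrow> 'a set set \<Rightarrow> bool" where
  "matroid E I \<longleftrightarrow> finite E \<and> (\<forall>X\<in>I. X \<subseteq> E) \<and> {} \<in> I
     \<and> (\<forall>X Y. X \<in> I \<and> Y \<subseteq> X \<longrightarrow> Y \<in> I)
     \<and> (\<forall>X Y. X \<in> I \<and> Y \<in> I \<and> card X < card Y \<longrightarrow> (\<exists>e\<in>Y - X. insert e X \<in> I))"

definition rank :: "'a set set \<Rightarrow> 'a set \<Rightarrow> nat" where
  "rank I S = Max {card X | X. X \<subseteq> S \<and> X \<in> I}"

definition base_polytope :: "'a set \<Rightarrow> 'a set set \<Rightarrow> ('a \<Rightarrow> real) set" where
  "base_polytope E I = {x. (\<forall>e\<in>E. x e \<ge> 0) \<and> (\<forall>e. e \<notin> E \<longrightarrow> x e = 0)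
      \<and> (\<forall>S\<subseteq>E. (\<Sum>e\<in>S. x e) \<le> real (rank I S))
      \<and> (\<Sum>e\<in>E. x e) = real (rank I E)}"

definition bilin :: "'a set \<Rightarrow> ('a \<Rightarrow> real) \<Rightarrow> ('a \<Rightarrow> 'a \<Rightarrow> real) \<Rightarrow> ('a \<Rightarrow> real) \<Rightarrow> real" where
  "bilin E x L y = (\<Sum>e\<in>E. \<Sum>f\<in>E. x e * L e f * y f)"

definition symmetric_NE :: "'a set \<Rightarrow> 'a set set \<Rightarrow> ('a \<Rightarrow> 'a \<Rightarrow> real) \<Rightarrow> ('a \<Rightarrow> real) \<Rightarrow> bool" where
  "symmetric_NE E I L x \<longleftrightarrow> x \<in> base_polytope E I \<and>
     (\<forall>z\<in>base_polytope E I. bilin E x L z \<le> bilin E x L x \<and> bilin E x L x \<le> bilin E z L x)"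

definition sorted_ratios :: "'a set \<Rightarrow> ('a \<Rightarrow> real) \<Rightarrow> ('a \<Rightarrow> real) \<Rightarrow> real list" where
  "sorted_ratios E w x = sorted_list_of_multiset (image_mset (\<lambda>e. x e / w e) (mset_set E))"

definition lex_le :: "real list \<Rightarrow> real list \<Rightarrow> bool" where
  "lex_le xs ys \<longleftrightarrow> xs = ys \<or>
     (\<exists>i < min (length xs) (length ys). take i xs = take i ys \<and> xs ! i < ys ! i)"

definition lex_optimal :: "'a set \<Rightarrow> 'a set set \<Rightarrow> ('a \<Rightarrow> real) \<Rightarrow> ('a \<Rightarrow> real) \<Rightarrow> bool" where
  "lex_optimal E I w x \<longleftrightarrow> x \<in> base_polytope E I \<and>
     (\<forall>y\<in>base_polytope E I. lex_le (sorted_ratios E w y) (sorted_ratios E w x))"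

end

theory Submission
  imports Defs "HOL-Library.Indicator_Function"
begin

text \<open>Since \<open>L\<close> is diagonal, the equilibrium inequality \<open>x\<^sup>T L x \<le> z\<^sup>T L x\<close> says that \<open>x\<close>
  minimises the linear cost \<open>u e = x e \<cdot> L e e = x e / w e\<close> over \<open>B(M)\<close>. Comparing \<open>x\<close> with
  the indicator of a greedy base for \<open>u\<close>, one that meets every sublevel set \<open>{u \<le> t}\<close> in as
  many elements as its rank, a summation by parts shows that \<open>x\<close> is tight on every sublevel
  set of \<open>u\<close>. Tightness forces every other \<open>y \<in> B(M)\<close> to drop strictly below \<open>x\<close> at the lowest
  level where the two differ, so the sorted ratios of \<open>y\<close> are lexicographically smaller than
  those of \<open>x\<close>.\<close>

definition lex_less :: "'a::order list \<Rightarrow> 'a list \<Rightarrow> bool" where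
  "lex_less xs ys \<longleftrightarrow>
     (\<exists>i < min (length xs) (length ys). take i xs = take i ys \<and> xs ! i < ys ! i)"

lemma lex_le_iff_eq_or_lex_less: "lex_le xs ys \<longleftrightarrow> xs = ys \<or> lex_less xs ys"
  unfolding lex_le_def lex_less_def ..

lemma lex_less_not_lex_le:
  assumes "lex_less xs ys"
  shows "\<not> lex_le ys xs"
proof
  assume "lex_le ys xs"
  obtain i where i: "i < min (length xs) (length ys)" "take i xs = take i ys" "xs ! i < ys ! i"
    using assms unfolding lex_less_def by blast
  have nth_eq: "as ! k = bs ! k" if "take j as = take j bs" "k < j" for as bs :: "real list" and j k
    using that by (metis nth_take)
  from \<open>lex_le ys xs\<close> show False
    unfolding lex_le_iff_eq_or_lex_less lex_less_def
  proof (elim disjE exE conjE)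
    assume "ys = xs"
    then show False using i(3) by simp
  next
    fix j assume j: "take j ys = take j xs" "ys ! j < xs ! j"
    consider "j < i" | "j = i" | "i < j" by linarith
    then show False
      by cases (use nth_eq[OF i(2)] nth_eq[OF j(1)] i(3) j(2) in force)+
  qed
qed

lemma count_image_mset_mset_set:
  assumes "finite A"
  shows "count (image_mset f (mset_set A)) y = card {a\<in>A. f a = y}"
proof -
  have "count (image_mset f (mset_set A)) y = (\<Sum>a | a \<in># mset_set A \<and> y = f a. count (mset_set A) a)"
    by (rule count_image_mset')
  also have "\<dots> = (\<Sum>a \<in> {a\<in>A. f a = y}. 1)"
    using assms by (intro sum.cong) (auto simp: count_mset_set')
  finally show ?thesis by simp
qed

lemma sorted_list_of_multiset_plus:
  fixes A B :: "'a::linorder multiset"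
  assumes "\<forall>a\<in>#A. \<forall>b\<in>#B. a \<le> b"
  shows "sorted_list_of_multiset (A + B) = sorted_list_of_multiset A @ sorted_list_of_multiset B"
proof -
  have "sorted (sorted_list_of_multiset A @ sorted_list_of_multiset B)"
    using assms by (simp add: sorted_append)
  then show ?thesis
    by (metis mset_append mset_sorted_list_of_multiset sorted_list_of_multiset_mset sorted_sort_id)
qed

text \<open>If two multisets of equal size agree below \<open>v\<close> and \<open>B\<close> has more copies of \<open>v\<close>,
  then both sorted lists start with the common part \<open>C\<close>, after which \<open>B\<close> continues with a value
  \<open>\<le> v\<close> while \<open>A\<close> continues with a value \<open>> v\<close>.\<close>
lemma lex_less_sorted_list_of_multiset:
  fixes A B :: "'a::linorder multiset"
  assumes size: "size A = size B" and below: "\<forall>w<v. count A w = count B w"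
    and at_v: "count A v < count B v"
  shows "lex_less (sorted_list_of_multiset B) (sorted_list_of_multiset A)"
proof -
  define C where "C = filter_mset (\<lambda>w. w < v) A + replicate_mset (count A v) v"
  define A' where "A' = filter_mset (\<lambda>w. v < w) A"
  define B' where "B' = filter_mset (\<lambda>w. v < w) B + replicate_mset (count B v - count A v) v"
  have A: "A = C + A'" unfolding C_def A'_def
    by (rule multiset_eqI) (auto simp: count_replicate_mset)
  have B: "B = C + B'" unfolding C_def B'_def
  proof (rule multiset_eqI)
    fix w show "count B w = count (filter_mset (\<lambda>w. w < v) A + replicate_mset (count A v) v +
        (filter_mset (\<lambda>w. v < w) B + replicate_mset (count B v - count A v) v)) w"
      using below at_v by (cases "w < v"; cases "w = v") (auto simp: count_replicate_mset)
  qed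
  have C_le: "\<forall>c\<in>#C. c \<le> v" and A'_gt: "\<forall>a\<in>#A'. v < a" and B'_ge: "\<forall>b\<in>#B'. v \<le> b"
    unfolding C_def A'_def B'_def by auto
  have "v \<in># B'" using at_v unfolding B'_def by (auto simp: count_replicate_mset)
  then have "A' \<noteq> {#}" using size A B by (cases B') auto
  let ?a = "sorted_list_of_multiset A'" and ?b = "sorted_list_of_multiset B'"
  have a: "sorted_list_of_multiset A = sorted_list_of_multiset C @ ?a"
    using A C_le A'_gt by (metis sorted_list_of_multiset_plus order.trans less_imp_le)
  have b: "sorted_list_of_multiset B = sorted_list_of_multiset C @ ?b"
    using B C_le B'_ge by (metis sorted_list_of_multiset_plus order.trans)
  obtain j where j: "j < length ?b" "?b ! j = v"
    using \<open>v \<in># B'\<close> by (metis in_set_conv_nth set_sorted_list_of_multiset)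
  have b0: "?b ! 0 \<le> v"
    using j sorted_nth_mono[OF sorted_sorted_list_of_multiset, of 0 j B'] by simp
  have "?a \<noteq> []" using \<open>A' \<noteq> {#}\<close> by (metis mset_sorted_list_of_multiset mset.simps(1))
  then have "?a ! 0 \<in># A'" by (metis nth_mem length_greater_0_conv set_sorted_list_of_multiset)
  then have a0: "v < ?a ! 0" using A'_gt by simp
  show ?thesis unfolding lex_less_def
  proof (intro exI conjI)
    let ?i = "length (sorted_list_of_multiset C)"
    show "?i < min (length (sorted_list_of_multiset B)) (length (sorted_list_of_multiset A))"
      using a b j \<open>?a \<noteq> []\<close> by auto
    show "take ?i (sorted_list_of_multiset B) = take ?i (sorted_list_of_multiset A)"
      using a b by simp
    show "sorted_list_of_multiset B ! ?i < sorted_list_of_multiset A ! ?i"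
      using a b b0 a0 by (simp add: nth_append)
  qed
qed

abbreviation sublevel :: "'a set \<Rightarrow> ('a \<Rightarrow> real) \<Rightarrow> real \<Rightarrow> 'a set" where
  "sublevel E u t \<equiv> {e\<in>E. u e \<le> t}"

text \<open>Summation by parts along the distinct values of \<open>u\<close>: removing the top level \<open>m\<close> and
  writing \<open>u - m = (u - m') + (m' - m)\<close> with the next level \<open>m'\<close> splits off the term
  \<open>(m' - m) \<cdot> (sum of d over the sublevel set at m')\<close>, which is nonnegative.\<close>
lemma sublevel_sums_nonpos_imp_weighted_sum_nonneg:
  fixes u d :: "'a \<Rightarrow> real"
  assumes "finite E" "E \<noteq> {}" "\<forall>t\<in>u ` E. (\<Sum>e\<in>sublevel E u t. d e) \<le> 0"
  shows "0 \<le> (\<Sum>e\<in>E. (u e - Max (u ` E)) * d e) \<and>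
    ((\<Sum>e\<in>E. (u e - Max (u ` E)) * d e) = 0 \<longrightarrow>
      (\<forall>t\<in>u ` E. t < Max (u ` E) \<longrightarrow> (\<Sum>e\<in>sublevel E u t. d e) = 0))"
  using assms
proof (induction "card E" arbitrary: E rule: less_induct)
  case less
  define m where "m = Max (u ` E)"
  define E' where "E' = {e\<in>E. u e < m}"
  have le_m: "\<forall>e\<in>E. u e \<le> m" unfolding m_def using less.prems by auto
  have sum_E': "(\<Sum>e\<in>E. (u e - m) * d e) = (\<Sum>e\<in>E'. (u e - m) * d e)"
    unfolding E'_def using less.prems le_m by (intro sum.mono_neutral_right) (auto simp: less_le)
  show ?case
  proof (cases "E' = {}")
    case True
    then have "\<forall>t\<in>u ` E. \<not> t < m" unfolding E'_def by auto
    then show ?thesis using sum_E' True unfolding m_def[symmetric] by simp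
  next
    case False
    define m' where "m' = Max (u ` E')"
    have "finite E'" using less.prems unfolding E'_def by auto
    have m'_in: "m' \<in> u ` E'" unfolding m'_def using \<open>finite E'\<close> False by auto
    then have "m' < m" unfolding E'_def by auto
    have le_m': "\<forall>e\<in>E'. u e \<le> m'" unfolding m'_def using \<open>finite E'\<close> by auto
    have sublevel_E': "sublevel E' u t = sublevel E u t" if "t < m" for t
      using that unfolding E'_def by auto
    have E'_sublevel: "sublevel E u m' = E'" using \<open>m' < m\<close> le_m' unfolding E'_def by auto
    have "m \<in> u ` E" unfolding m_def using less.prems by simp
    then have "E' \<subset> E" unfolding E'_def by auto
    then have "card E' < card E" using less.prems by (simp add: psubset_card_mono)
    moreover have "\<forall>t\<in>u ` E'. (\<Sum>e\<in>sublevel E' u t. d e) \<le> 0"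
      using less.prems(3) sublevel_E' unfolding E'_def by auto
    ultimately have IH: "0 \<le> (\<Sum>e\<in>E'. (u e - m') * d e) \<and>
        ((\<Sum>e\<in>E'. (u e - m') * d e) = 0 \<longrightarrow>
          (\<forall>t\<in>u ` E'. t < m' \<longrightarrow> (\<Sum>e\<in>sublevel E' u t. d e) = 0))"
      using less.hyps \<open>finite E'\<close> False unfolding m'_def by blast
    have "(\<Sum>e\<in>E'. d e) \<le> 0"
      using less.prems(3) m'_in E'_sublevel unfolding E'_def by force
    then have top: "0 \<le> (m' - m) * (\<Sum>e\<in>E'. d e)"
      using \<open>m' < m\<close> by (simp add: mult_nonpos_nonpos)
    have split: "(\<Sum>e\<in>E'. (u e - m) * d e) =
        (\<Sum>e\<in>E'. (u e - m') * d e) + (m' - m) * (\<Sum>e\<in>E'. d e)"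
      by (simp add: algebra_simps sum.distrib sum_distrib_left sum_subtractf)
    have "(\<Sum>e\<in>sublevel E u t. d e) = 0"
      if zero: "(\<Sum>e\<in>E. (u e - m) * d e) = 0" and t: "t \<in> u ` E" "t < m" for t
    proof -
      have zero': "(\<Sum>e\<in>E'. (u e - m') * d e) = 0" "(m' - m) * (\<Sum>e\<in>E'. d e) = 0"
        using zero sum_E' split top IH by linarith+
      have "t \<in> u ` E'" using t unfolding E'_def by auto
      then have "t < m' \<or> t = m'" using le_m' by auto
      then show ?thesis
      proof
        assume "t < m'"
        then show ?thesis using IH zero' \<open>t \<in> u ` E'\<close> sublevel_E'[OF \<open>t < m\<close>] by auto
      qed (use E'_sublevel zero' \<open>m' < m\<close> in simp)
    qed
    then show ?thesis using sum_E' split top IH unfolding m_def by auto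
  qed
qed

lemma sum_sublevel_eq_zero:
  fixes u d :: "'a \<Rightarrow> real"
  assumes "finite E"
    and nonpos: "\<forall>t\<in>u ` E. (\<Sum>e\<in>sublevel E u t. d e) \<le> 0"
    and total: "(\<Sum>e\<in>E. d e) = 0" and weighted: "(\<Sum>e\<in>E. u e * d e) \<le> 0"
    and t: "t \<in> u ` E"
  shows "(\<Sum>e\<in>sublevel E u t. d e) = 0"
proof -
  define m where "m = Max (u ` E)"
  have "E \<noteq> {}" using t by auto
  have "(\<Sum>e\<in>E. (u e - m) * d e) = (\<Sum>e\<in>E. u e * d e) - m * (\<Sum>e\<in>E. d e)"
    by (simp add: left_diff_distrib sum_subtractf sum_distrib_left)
  moreover have "0 \<le> (\<Sum>e\<in>E. (u e - m) * d e)"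
    using sublevel_sums_nonpos_imp_weighted_sum_nonneg[OF \<open>finite E\<close> \<open>E \<noteq> {}\<close> nonpos] unfolding m_def by blast
  ultimately have zero: "(\<Sum>e\<in>E. (u e - m) * d e) = 0" using total weighted by simp
  show ?thesis
  proof (cases "t < m")
    case True
    then show ?thesis
      using sublevel_sums_nonpos_imp_weighted_sum_nonneg[OF \<open>finite E\<close> \<open>E \<noteq> {}\<close> nonpos] zero t
      unfolding m_def by blast
  next
    case False
    have "\<forall>e\<in>E. u e \<le> m" unfolding m_def using \<open>finite E\<close> by simp
    then have "sublevel E u t = E" using False by force
    then show ?thesis using total by simp
  qed
qed

lemma matroid_finite: "matroid E I \<Longrightarrow> finite E"
  unfolding matroid_def by blast

lemma matroid_indep_subset: "matroid E I \<Longrightarrow> X \<in> I \<Longrightarrow> X \<subseteq> E"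
  unfolding matroid_def by blast

lemma matroid_indep_finite: "matroid E I \<Longrightarrow> X \<in> I \<Longrightarrow> finite X"
  using matroid_finite matroid_indep_subset finite_subset by metis

lemma matroid_indep_downward: "matroid E I \<Longrightarrow> X \<in> I \<Longrightarrow> Y \<subseteq> X \<Longrightarrow> Y \<in> I"
  unfolding matroid_def by blast

lemma matroid_augment:
  "matroid E I \<Longrightarrow> X \<in> I \<Longrightarrow> Y \<in> I \<Longrightarrow> card X < card Y \<Longrightarrow> \<exists>e\<in>Y - X. insert e X \<in> I"
  unfolding matroid_def by blast

lemma matroid_extend_indep:
  assumes "matroid E I" "X \<in> I" "Y \<in> I" "card X \<le> card Y"
  shows "\<exists>Z\<in>I. X \<subseteq> Z \<and> Z \<subseteq> X \<union> Y \<and> card Z = card Y"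
  using assms(2-)
proof (induction "card Y - card X" arbitrary: X)
  case 0
  then show ?case by auto
next
  case (Suc n)
  then obtain e where e: "e \<in> Y - X" "insert e X \<in> I"
    using matroid_augment[OF assms(1)] by (metis Suc_neq_Zero diff_is_0_eq le_neq_implies_less)
  have "card (insert e X) = Suc (card X)"
    using e matroid_indep_finite[OF assms(1) Suc.prems(1)] by simp
  then have "n = card Y - card (insert e X)" "card (insert e X) \<le> card Y"
    using Suc.hyps(2) by auto
  then obtain Z where "Z \<in> I" "insert e X \<subseteq> Z" "Z \<subseteq> insert e X \<union> Y" "card Z = card Y"
    using Suc.hyps(1) Suc.prems(2) e(2) by blast
  then show ?case using e by blast
qed

lemma rank_witness:
  assumes "matroid E I" "S \<subseteq> E"
  shows "\<exists>X\<subseteq>S. X \<in> I \<and> card X = rank I S"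
proof -
  have "{card X | X. X \<subseteq> S \<and> X \<in> I} \<subseteq> card ` Pow S" by auto
  moreover have "finite S" using assms matroid_finite finite_subset by metis
  ultimately have "finite {card X | X. X \<subseteq> S \<and> X \<in> I}" by (meson finite_imageI finite_Pow_iff finite_subset)
  moreover have "{} \<in> I" using assms(1) unfolding matroid_def by blast
  ultimately have "rank I S \<in> {card X | X. X \<subseteq> S \<and> X \<in> I}"
    unfolding rank_def by (intro Max_in) auto
  then show ?thesis by auto
qed

lemma card_le_rank:
  assumes "matroid E I" "S \<subseteq> E" "X \<subseteq> S" "X \<in> I"
  shows "card X \<le> rank I S"
proof -
  have "finite S" using assms matroid_finite finite_subset by metis
  then have "finite {card X | X. X \<subseteq> S \<and> X \<in> I}"
    by (rule finite_subset[rotated, OF finite_imageI[OF finite_Pow_iff[THEN iffD2]]]) auto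
  then show ?thesis unfolding rank_def using assms(3,4) by (intro Max_ge) auto
qed

definition is_base :: "'a set \<Rightarrow> 'a set set \<Rightarrow> 'a set \<Rightarrow> bool" where
  "is_base E I B \<longleftrightarrow> B \<subseteq> E \<and> B \<in> I \<and> card B = rank I E"

lemma indicator_base_in_base_polytope:
  assumes "matroid E I" "is_base E I B"
  shows "indicator B \<in> base_polytope E I"
proof -
  have B: "B \<subseteq> E" "B \<in> I" "card B = rank I E" using assms(2) unfolding is_base_def by auto
  have sum_S: "(\<Sum>e\<in>S. indicator B e) = real (card (S \<inter> B))" if "S \<subseteq> E" for S
  proof -
    have "finite S" using that matroid_finite[OF assms(1)] finite_subset by metis
    then show ?thesis by (simp add: sum_indicator_eq_card flip: real_of_nat_indicator of_nat_sum)
  qed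
  have "card (S \<inter> B) \<le> rank I S" if "S \<subseteq> E" for S
    using card_le_rank[OF assms(1) that _ matroid_indep_downward[OF assms(1) B(2)]] by blast
  moreover have "E \<inter> B = B" using B(1) by auto
  ultimately show ?thesis
    unfolding base_polytope_def using B sum_S by (auto simp: indicator_def)
qed

lemma base_exchange_into:
  assumes m: "matroid E I" and B: "is_base E I B" and S: "S \<subseteq> E"
    and short: "card (B \<inter> S) < rank I S"
  shows "\<exists>f\<in>S - B. \<exists>e\<in>B - S. is_base E I (insert f (B - {e}))"
proof -
  have B_props: "B \<subseteq> E" "B \<in> I" "card B = rank I E" using B unfolding is_base_def by auto
  have "finite B" using matroid_indep_finite[OF m B_props(2)] .
  have "B \<inter> S \<in> I" using matroid_indep_downward[OF m B_props(2)] by blast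
  obtain X where X: "X \<subseteq> S" "X \<in> I" "card X = rank I S" using rank_witness[OF m S] by blast
  then obtain f where f: "f \<in> X - B \<inter> S" "insert f (B \<inter> S) \<in> I"
    using matroid_augment[OF m \<open>B \<inter> S \<in> I\<close> X(2)] short by auto
  have "f \<in> S" "f \<notin> B" using f X by auto
  have "rank I S \<le> rank I E" using card_le_rank[OF m order_refl _ X(2)] X S by auto
  then have "\<not> B \<subseteq> S" using short B_props by (metis inf.absorb1 not_less)
  then have "B \<inter> S \<subset> B" by auto
  then have "card (B \<inter> S) < card B" using \<open>finite B\<close> by (rule psubset_card_mono[rotated])
  then have "card (insert f (B \<inter> S)) \<le> card B" using \<open>finite B\<close> \<open>f \<notin> B\<close> by simp
  then obtain Z where Z: "Z \<in> I" "insert f (B \<inter> S) \<subseteq> Z" "Z \<subseteq> insert f (B \<inter> S) \<union> B"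
      "card Z = card B"
    using matroid_extend_indep[OF m f(2) B_props(2)] by blast
  have "finite Z" using matroid_indep_finite[OF m Z(1)] .
  have "\<not> B \<subseteq> Z"
  proof
    assume "B \<subseteq> Z"
    then have "card (insert f B) \<le> card Z" using Z(2) \<open>finite Z\<close> by (simp add: card_mono)
    then show False using \<open>f \<notin> B\<close> \<open>finite B\<close> Z(4) by simp
  qed
  then obtain e where e: "e \<in> B" "e \<notin> Z" by auto
  have "e \<notin> S" using e Z(2) by auto
  have "Z \<subseteq> insert f (B - {e})" using Z(3) e by auto
  moreover have "card (insert f (B - {e})) = card Z"
    using \<open>finite B\<close> \<open>f \<notin> B\<close> e(1) Z(4) card_Suc_Diff1 by fastforce
  ultimately have "Z = insert f (B - {e})" using \<open>finite B\<close> by (intro card_subset_eq) auto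
  then have "is_base E I (insert f (B - {e}))"
    using Z B_props matroid_indep_subset[OF m Z(1)] unfolding is_base_def by simp
  then show ?thesis using \<open>f \<in> S\<close> \<open>f \<notin> B\<close> e \<open>e \<notin> S\<close> by blast
qed

lemma card_sublevel_exchange_mono:
  assumes "finite B" "e \<in> B" "f \<notin> B" "f \<in> E" "u f < u e"
  shows "card (B \<inter> sublevel E u t) \<le> card (insert f (B - {e}) \<inter> sublevel E u t)"
proof (cases "e \<in> sublevel E u t")
  case True
  then have "insert f (B - {e}) \<inter> sublevel E u t = insert f (B \<inter> sublevel E u t - {e})"
    using assms by auto
  then show ?thesis using True assms by (simp add: card_Suc_Diff1)
next
  case False
  then have "B \<inter> sublevel E u t \<subseteq> insert f (B - {e}) \<inter> sublevel E u t" by auto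
  then show ?thesis using assms by (intro card_mono) auto
qed

text \<open>A base maximising \<open>\<Sum>\<^sub>t |B \<inter> sublevel t|\<close> is tight on every sublevel set: otherwise
  \<open>base_exchange_into\<close> trades an element above level \<open>t\<close> for one below it, which increases
  every term and the \<open>t\<close>-th one strictly.\<close>
lemma exists_base_tight_on_sublevels:
  fixes u :: "'a \<Rightarrow> real"
  assumes m: "matroid E I"
  shows "\<exists>B. is_base E I B \<and>
    (\<forall>t\<in>u ` E. card (B \<inter> sublevel E u t) = rank I (sublevel E u t))"
proof -
  define \<phi> where "\<phi> B = (\<Sum>t\<in>u ` E. card (B \<inter> sublevel E u t))" for B
  have fin: "finite E" using matroid_finite[OF m] .
  have "finite (Collect (is_base E I))"
    using fin by (rule finite_subset[rotated, OF finite_Pow_iff[THEN iffD2]]) (auto simp: is_base_def)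
  moreover have "Collect (is_base E I) \<noteq> {}"
    using rank_witness[OF m order_refl] unfolding is_base_def by auto
  ultimately have "Max (\<phi> ` Collect (is_base E I)) \<in> \<phi> ` Collect (is_base E I)"
    and max: "\<And>B'. is_base E I B' \<Longrightarrow> \<phi> B' \<le> Max (\<phi> ` Collect (is_base E I))"
    by auto
  then obtain B where B: "is_base E I B" "\<phi> B = Max (\<phi> ` Collect (is_base E I))" by auto
  have "finite B" using B(1) fin finite_subset unfolding is_base_def by metis
  have "card (B \<inter> sublevel E u t) = rank I (sublevel E u t)" if t: "t \<in> u ` E" for t
  proof (rule ccontr)
    assume "card (B \<inter> sublevel E u t) \<noteq> rank I (sublevel E u t)"
    moreover have "card (B \<inter> sublevel E u t) \<le> rank I (sublevel E u t)"
      using B(1) matroid_indep_downward[OF m] card_le_rank[OF m] unfolding is_base_def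
      by (metis (no_types, lifting) inf_le1 inf_le2 mem_Collect_eq subsetI)
    ultimately obtain f e where f: "f \<in> sublevel E u t - B" and e: "e \<in> B - sublevel E u t"
        and Z: "is_base E I (insert f (B - {e}))"
      using base_exchange_into[OF m B(1), of "sublevel E u t"] by fastforce
    have "e \<in> E" using e B(1) unfolding is_base_def by auto
    then have "u f < u e" using e f by auto
    have "\<phi> B < \<phi> (insert f (B - {e}))" unfolding \<phi>_def
    proof (rule sum_strict_mono_ex1)
      show "\<forall>s\<in>u ` E. card (B \<inter> sublevel E u s) \<le> card (insert f (B - {e}) \<inter> sublevel E u s)"
        using card_sublevel_exchange_mono[OF \<open>finite B\<close>] e f \<open>u f < u e\<close> by blast
      have "insert f (B \<inter> sublevel E u t) \<subseteq> insert f (B - {e}) \<inter> sublevel E u t" using f e by auto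
      then have "card (insert f (B \<inter> sublevel E u t)) \<le> card (insert f (B - {e}) \<inter> sublevel E u t)"
        using \<open>finite B\<close> by (intro card_mono) auto
      moreover have "card (insert f (B \<inter> sublevel E u t)) = Suc (card (B \<inter> sublevel E u t))"
        using f \<open>finite B\<close> by simp
      ultimately show "\<exists>s\<in>u ` E. card (B \<inter> sublevel E u s) < card (insert f (B - {e}) \<inter> sublevel E u s)"
        using t by (metis Suc_le_eq)
    qed (use fin in simp)
    then show False using max[OF Z] B(2) by simp
  qed
  then show ?thesis using B(1) by blast
qed

definition tight_on_sublevels ::
    "'a set \<Rightarrow> 'a set set \<Rightarrow> ('a \<Rightarrow> real) \<Rightarrow> ('a \<Rightarrow> real) \<Rightarrow> bool" where
  "tight_on_sublevels E I u x \<longleftrightarrow>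
     (\<forall>t\<in>u ` E. (\<Sum>e\<in>sublevel E u t. x e) = real (rank I (sublevel E u t)))"

text \<open>Compare \<open>x\<close> with the indicator \<open>z\<close> of a base that is tight on all sublevel sets of \<open>u\<close>:
  the prefix sums of \<open>x - z\<close> along \<open>u\<close> are \<open>\<le> 0\<close> and \<open>\<Sum> u (x - z) \<le> 0\<close>, which
  forces all prefix sums to vanish.\<close>
lemma base_polytope_minimizer_tight_on_sublevels:
  assumes m: "matroid E I" and x: "x \<in> base_polytope E I"
    and min: "\<forall>z\<in>base_polytope E I. (\<Sum>e\<in>E. u e * x e) \<le> (\<Sum>e\<in>E. u e * z e)"
  shows "tight_on_sublevels E I u x"
  unfolding tight_on_sublevels_def
proof
  fix t assume t: "t \<in> u ` E"
  have fin: "finite E" using matroid_finite[OF m] .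
  obtain B where B: "is_base E I B"
    and B_tight: "\<forall>s\<in>u ` E. card (B \<inter> sublevel E u s) = rank I (sublevel E u s)"
    using exists_base_tight_on_sublevels[OF m] by blast
  define z where "z = (indicator B :: 'a \<Rightarrow> real)"
  have z: "z \<in> base_polytope E I" unfolding z_def by (rule indicator_base_in_base_polytope[OF m B])
  have z_sublevel: "(\<Sum>e\<in>sublevel E u s. z e) = real (rank I (sublevel E u s))" if "s \<in> u ` E" for s
  proof -
    have "card (B \<inter> sublevel E u s) = rank I (sublevel E u s)"
      using B_tight that by blast
    then have "card (sublevel E u s \<inter> B) = rank I (sublevel E u s)"
      by (simp add: Int_commute)
    then show ?thesis
      using fin unfolding z_def by (simp add: sum_indicator_eq_card flip: real_of_nat_indicator of_nat_sum)
  qed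
  define d where "d e = x e - z e" for e
  have sum_d: "(\<Sum>e\<in>S. d e) = (\<Sum>e\<in>S. x e) - (\<Sum>e\<in>S. z e)" for S
    unfolding d_def by (simp add: sum_subtractf)
  have "\<forall>s\<in>u ` E. (\<Sum>e\<in>sublevel E u s. d e) \<le> 0"
    using x z_sublevel sum_d unfolding base_polytope_def by auto
  moreover have "(\<Sum>e\<in>E. d e) = 0"
    using x z sum_d unfolding base_polytope_def by simp
  moreover have "(\<Sum>e\<in>E. u e * d e) \<le> 0"
    using min z unfolding d_def by (simp add: right_diff_distrib sum_subtractf)
  ultimately have "(\<Sum>e\<in>sublevel E u t. d e) = 0"
    using sum_sublevel_eq_zero[OF fin _ _ _ t] by blast
  then show "(\<Sum>e\<in>sublevel E u t. x e) = real (rank I (sublevel E u t))"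
    using sum_d z_sublevel[OF t] by simp
qed

lemma bilin_diagonal:
  assumes "finite E" "\<forall>e\<in>E. \<forall>f\<in>E. e \<noteq> f \<longrightarrow> L e f = 0"
  shows "bilin E a L b = (\<Sum>e\<in>E. a e * L e e * b e)"
  unfolding bilin_def
proof (rule sum.cong[OF refl])
  fix e assume e: "e \<in> E"
  have "(\<Sum>f\<in>E. a e * L e f * b f) = (\<Sum>f\<in>E. if f = e then a e * L e e * b e else 0)"
    using assms e by (intro sum.cong) auto
  also have "\<dots> = a e * L e e * b e" using e assms(1) by simp
  finally show "(\<Sum>f\<in>E. a e * L e f * b f) = a e * L e e * b e" .
qed

lemma symmetric_NE_diagonal_minimizer:
  assumes "finite E" "\<forall>e\<in>E. \<forall>f\<in>E. e \<noteq> f \<longrightarrow> L e f = 0" "symmetric_NE E I L x"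
  shows "\<forall>z\<in>base_polytope E I. (\<Sum>e\<in>E. x e * L e e * x e) \<le> (\<Sum>e\<in>E. x e * L e e * z e)"
proof
  fix z assume "z \<in> base_polytope E I"
  then have "bilin E x L x \<le> bilin E z L x" using assms(3) unfolding symmetric_NE_def by blast
  then show "(\<Sum>e\<in>E. x e * L e e * x e) \<le> (\<Sum>e\<in>E. x e * L e e * z e)"
    unfolding bilin_diagonal[OF assms(1,2)] by (simp add: ac_simps)
qed

lemma tight_on_sublevels_first_decrease:
  assumes "finite E" and x: "x \<in> base_polytope E I" and y: "y \<in> base_polytope E I" "y \<noteq> x"
    and tight: "tight_on_sublevels E I u x"
  shows "\<exists>e\<^sub>1\<in>E. y e\<^sub>1 < x e\<^sub>1 \<and> (\<forall>e\<in>E. u e < u e\<^sub>1 \<longrightarrow> y e = x e)"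
proof -
  define D where "D = {e\<in>E. y e \<noteq> x e}"
  have "D \<noteq> {}"
  proof
    assume "D = {}"
    have "y e = x e" for e
    proof (cases "e \<in> E")
      case True
      then show ?thesis using \<open>D = {}\<close> unfolding D_def by auto
    next
      case False
      then show ?thesis using x y(1) by (simp add: base_polytope_def)
    qed
    then show False using y(2) by auto
  qed
  define t where "t = Min (u ` D)"
  have "finite D" using \<open>finite E\<close> unfolding D_def by auto
  then have t_in: "t \<in> u ` D" and t_min: "\<forall>e\<in>D. t \<le> u e"
    unfolding t_def using \<open>D \<noteq> {}\<close> by auto
  then obtain e\<^sub>0 where e\<^sub>0: "e\<^sub>0 \<in> D" "u e\<^sub>0 = t" by auto
  let ?S = "sublevel E u t"
  have "\<exists>e\<^sub>1\<in>?S. y e\<^sub>1 < x e\<^sub>1"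
  proof (rule ccontr)
    assume "\<not> ?thesis"
    then have ge: "\<forall>e\<in>?S. x e \<le> y e" by (meson not_less)
    have "e\<^sub>0 \<in> ?S" using e\<^sub>0 unfolding D_def by simp
    then have "x e\<^sub>0 \<le> y e\<^sub>0" using ge by blast
    moreover have "y e\<^sub>0 \<noteq> x e\<^sub>0" using e\<^sub>0(1) unfolding D_def by simp
    ultimately have "x e\<^sub>0 < y e\<^sub>0" by simp
    have less: "(\<Sum>e\<in>?S. x e) < (\<Sum>e\<in>?S. y e)"
    proof (rule sum_strict_mono_ex1)
      show "finite ?S" using \<open>finite E\<close> by simp
      show "\<exists>e\<in>?S. x e < y e" using \<open>e\<^sub>0 \<in> ?S\<close> \<open>x e\<^sub>0 < y e\<^sub>0\<close> by blast
    qed (rule ge)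
    have "t \<in> u ` E" using e\<^sub>0 unfolding D_def by auto
    then have "(\<Sum>e\<in>?S. x e) = real (rank I ?S)"
      using tight unfolding tight_on_sublevels_def by blast
    moreover have "(\<Sum>e\<in>?S. y e) \<le> real (rank I ?S)"
      using y(1) unfolding base_polytope_def by (metis (no_types, lifting) mem_Collect_eq subsetI)
    ultimately show False using less by linarith
  qed
  then obtain e\<^sub>1 where e\<^sub>1: "e\<^sub>1 \<in> ?S" "y e\<^sub>1 < x e\<^sub>1" by blast
  then have "e\<^sub>1 \<in> D" unfolding D_def by auto
  then have "t \<le> u e\<^sub>1" using t_min by blast
  then have "u e\<^sub>1 = t" using e\<^sub>1(1) by simp
  moreover have "y e = x e" if "e \<in> E" "u e < t" for e
  proof (rule ccontr)
    assume "y e \<noteq> x e"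
    then have "e \<in> D" using that(1) unfolding D_def by simp
    then have "t \<le> u e" using t_min by blast
    then show False using that(2) by simp
  qed
  ultimately show ?thesis using e\<^sub>1 by auto
qed

text \<open>The first value at which the multisets of \<open>f\<close>- and \<open>g\<close>-values differ is
  \<open>v = min {g e | f e \<ge> f e\<^sub>1}\<close>: below \<open>v\<close> the two agree, and \<open>g\<close> attains \<open>v\<close> more often.\<close>
lemma lex_less_sorted_image_mset:
  fixes f g :: "'a \<Rightarrow> 'b::linorder"
  assumes "finite E" "e\<^sub>1 \<in> E" "g e\<^sub>1 < f e\<^sub>1" and agree: "\<forall>e\<in>E. f e < f e\<^sub>1 \<longrightarrow> g e = f e"
  shows "lex_less (sorted_list_of_multiset (image_mset g (mset_set E)))
    (sorted_list_of_multiset (image_mset f (mset_set E)))"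
proof -
  define G where "G = {e\<in>E. f e\<^sub>1 \<le> f e}"
  define v where "v = Min (g ` G)"
  have "finite G" "e\<^sub>1 \<in> G" using assms unfolding G_def by auto
  then have "v \<in> g ` G" and v_min: "\<forall>e\<in>G. v \<le> g e"
    unfolding v_def by (auto intro: Min_in)
  then obtain e\<^sub>2 where e\<^sub>2: "e\<^sub>2 \<in> G" "g e\<^sub>2 = v" by auto
  have "v \<le> g e\<^sub>1" using v_min \<open>e\<^sub>1 \<in> G\<close> by blast
  then have "v < f e\<^sub>1" using assms(3) by (rule le_less_trans)
  have f_level: "{e\<in>E. f e = w} \<subseteq> {e\<in>E. g e = w}" if "w \<le> v" for w
  proof
    fix e assume e: "e \<in> {e\<in>E. f e = w}"
    then have "f e \<le> v" using that by simp
    then have "f e < f e\<^sub>1" using \<open>v < f e\<^sub>1\<close> by (rule le_less_trans)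
    then show "e \<in> {e\<in>E. g e = w}" using e agree by simp
  qed
  have g_level: "{e\<in>E. g e = w} \<subseteq> {e\<in>E. f e = w}" if "w < v" for w
  proof
    fix e assume e: "e \<in> {e\<in>E. g e = w}"
    have "e \<notin> G"
    proof
      assume "e \<in> G"
      then have "v \<le> g e" using v_min by blast
      then show False using e that by simp
    qed
    then have "f e < f e\<^sub>1" using e unfolding G_def by (simp add: not_le)
    then have "g e = f e" using e agree by blast
    then show "e \<in> {e\<in>E. f e = w}" using e by simp
  qed
  have below: "\<forall>w<v. card {e\<in>E. f e = w} = card {e\<in>E. g e = w}"
  proof (intro allI impI)
    fix w assume "w < v"
    then have "{e\<in>E. f e = w} = {e\<in>E. g e = w}"
      using f_level[OF less_imp_le] g_level by (intro equalityI)
    then show "card {e\<in>E. f e = w} = card {e\<in>E. g e = w}" by simp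
  qed
  have "e\<^sub>2 \<in> {e\<in>E. g e = v} - {e\<in>E. f e = v}" using e\<^sub>2 \<open>v < f e\<^sub>1\<close> unfolding G_def by auto
  then have "{e\<in>E. f e = v} \<subset> {e\<in>E. g e = v}" using f_level[of v] by blast
  then have "card {e\<in>E. f e = v} < card {e\<in>E. g e = v}"
    using \<open>finite E\<close> by (simp add: psubset_card_mono)
  then show ?thesis
    using below \<open>finite E\<close>
    by (intro lex_less_sorted_list_of_multiset) (simp_all add: count_image_mset_mset_set)
qed

lemma tight_on_sublevels_lex_less:
  assumes "finite E" "\<forall>e\<in>E. 0 < w e"
    and "x \<in> base_polytope E I" "y \<in> base_polytope E I" "y \<noteq> x"
    and "tight_on_sublevels E I (\<lambda>e. x e / w e) x"
  shows "lex_less (sorted_ratios E w y) (sorted_ratios E w x)"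
proof -
  obtain e\<^sub>1 where e\<^sub>1: "e\<^sub>1 \<in> E" "y e\<^sub>1 < x e\<^sub>1"
    and agree: "\<forall>e\<in>E. x e / w e < x e\<^sub>1 / w e\<^sub>1 \<longrightarrow> y e = x e"
    using tight_on_sublevels_first_decrease[OF assms(1,3-6)] by blast
  have "y e\<^sub>1 / w e\<^sub>1 < x e\<^sub>1 / w e\<^sub>1"
    using e\<^sub>1 assms(2) by (simp add: divide_strict_right_mono)
  moreover have "\<forall>e\<in>E. x e / w e < x e\<^sub>1 / w e\<^sub>1 \<longrightarrow> y e / w e = x e / w e"
    using agree by simp
  ultimately show ?thesis
    unfolding sorted_ratios_def by (rule lex_less_sorted_image_mset[OF assms(1) e\<^sub>1(1)])
qed

lemma lex_optimal_unique_if_lex_greatest: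
  assumes "x \<in> base_polytope E I"
    and greatest: "\<forall>y\<in>base_polytope E I. y \<noteq> x \<longrightarrow> lex_less (sorted_ratios E w y) (sorted_ratios E w x)"
  shows "lex_optimal E I w x \<and> (\<forall>y. lex_optimal E I w y \<longrightarrow> y = x)"
proof
  show "lex_optimal E I w x"
    using assms unfolding lex_optimal_def lex_le_iff_eq_or_lex_less by auto
  show "\<forall>y. lex_optimal E I w y \<longrightarrow> y = x"
  proof (intro allI impI)
    fix y assume y: "lex_optimal E I w y"
    then have "lex_le (sorted_ratios E w x) (sorted_ratios E w y)"
      using assms(1) unfolding lex_optimal_def by blast
    then show "y = x"
      using y greatest lex_less_not_lex_le unfolding lex_optimal_def by blast
  qed
qed

theorem corollary14:
  fixes E :: "'a set" and I :: "'a set set" and L :: "'a \<Rightarrow> 'a \<Rightarrow> real"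
    and x :: "'a \<Rightarrow> real"
  assumes "matroid E I"
    and "\<forall>e\<in>E. \<forall>f\<in>E. e \<noteq> f \<longrightarrow> L e f = 0"
    and "\<forall>e\<in>E. L e e > 0"
    and "symmetric_NE E I L x"
  shows "lex_optimal E I (\<lambda>e. 1 / L e e) x \<and>
    (\<forall>y. lex_optimal E I (\<lambda>e. 1 / L e e) y \<longrightarrow> y = x)"
proof (rule lex_optimal_unique_if_lex_greatest)
  have fin: "finite E" using matroid_finite[OF assms(1)] .
  show x: "x \<in> base_polytope E I" using assms(4) unfolding symmetric_NE_def by blast
  have "\<forall>z\<in>base_polytope E I. (\<Sum>e\<in>E. x e * L e e * x e) \<le> (\<Sum>e\<in>E. x e * L e e * z e)"
    using symmetric_NE_diagonal_minimizer[OF fin assms(2,4)] .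
  then have "tight_on_sublevels E I (\<lambda>e. x e * L e e) x"
    by (rule base_polytope_minimizer_tight_on_sublevels[OF assms(1) x])
  moreover have "(\<lambda>e. x e / (1 / L e e)) = (\<lambda>e. x e * L e e)" by simp
  ultimately have tight: "tight_on_sublevels E I (\<lambda>e. x e / (1 / L e e)) x" by simp
  have w_pos: "\<forall>e\<in>E. 0 < 1 / L e e" using assms(3) by simp
  show "\<forall>y\<in>base_polytope E I. y \<noteq> x \<longrightarrow>
      lex_less (sorted_ratios E (\<lambda>e. 1 / L e e) y) (sorted_ratios E (\<lambda>e. 1 / L e e) x)"
    using tight_on_sublevels_lex_less[OF fin w_pos x _ _ tight] by blast
qed

end
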